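(* Let $\chi$ be a kernel satisfying $(\chi_2)$ with $\eta>0$ and $m_5(\chi)<\infty$. Then for every $f\in\mathcal{UB}^{\bar\omega}_+(\mathbb{R}_+)$ and every $w\ge1$, $$\|MG^{\chi}_w f-f\|_{\bar\omega}\le \frac{64\,\Omega(f,1/w)}{\eta}\big[m_0(\chi)+m_5(\chi)\big];$$ equivalently, for all $x>0$, $|MG^{\chi}_w(f,x)-f(x)|\le \frac{64(1+\log^2x)\Omega(f,1/w)}{\eta}[m_0(\chi)+m_5(\chi)]$.
   Context: $\mathbb{R}_+$ denotes the positive reals; $\bigvee_{k\in\Lambda}T_k=\sup\{T_k:k\in\Lambda\}$. A kernel is a bounded measurable $\chi:\mathbb{R}_+\to\mathbb{R}$. Moments: $m_{\nu}(\chi)=\sup_{u>0}\bigvee_{k\in\mathbb{Z}}|\chi(e^{-k}u)||k-\log u|^{\nu}$. Condition $(\chi_2)$: $\eta:=\inf_{x\in[1,e]}\chi(x)$ exists. Weight $\bar\omega(x)=\frac1{1+\log^2x}$, $\|f\|_{\bar\omega}=\sup_{x>0}\bar\omega(x)|f(x)|$. $\mathcal{UB}^{\bar\omega}_+(\mathbb{R}_+)$: nonnegative $f$ such that $\bar\omega f$ is bounded and log-uniformly continuous (for every $\epsilon>0$ there is $\delta>0$ with $|g(x)-g(y)|<\epsilon$ whenever $|\log x-\log y|\le\delta$). Weighted logarithmic modulus of continuity: $\Omega(f,\delta)=\sup_{|\log t|\le\delta,\ x>0}\frac{|f(tx)-f(x)|}{(1+\log^2x)(1+\log^2t)}$. Operator: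 $MG^{\chi}_w(f,x)=\frac{\bigvee_{k\in\mathbb{Z}}\chi(e^{-k}x^{w})f(e^{k/w})}{\bigvee_{k\in\mathbb{Z}}\chi(e^{-k}x^{w})}$. *)

theory Defs
  imports "HOL-Analysis.Analysis"
begin

definition is_kernel :: "(real \<Rightarrow> real) \<Rightarrow> bool" where
  "is_kernel K \<longleftrightarrow> K \<in> borel_measurable (restrict_space borel {(0::real)<..}) \<and> bounded (K ` {(0::real)<..})"

definition moment :: "nat \<Rightarrow> (real \<Rightarrow> real) \<Rightarrow> ereal" where
  "moment \<nu> K = (SUP u\<in>{(0::real)<..}. SUP k\<in>(UNIV::int set).
      ereal (\<bar>K (exp (- real_of_int k) * u)\<bar> * \<bar>real_of_int k - ln u\<bar> ^ \<nu>))"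

definition eta :: "(real \<Rightarrow> real) \<Rightarrow> real" where
  "eta K = Inf (K ` {1..exp 1})"

definition omega_bar :: "real \<Rightarrow> real" where
  "omega_bar x = 1 / (1 + (ln x)^2)"

definition log_unif_cont :: "(real \<Rightarrow> real) \<Rightarrow> bool" where
  "log_unif_cont g \<longleftrightarrow> (\<forall>\<epsilon>>0. \<exists>\<delta>>0. \<forall>x>0. \<forall>y>0.
      \<bar>ln x - ln y\<bar> \<le> \<delta> \<longrightarrow> \<bar>g x - g y\<bar> < \<epsilon>)"

definition UB_plus :: "(real \<Rightarrow> real) set" where
  "UB_plus = {f. (\<forall>x>0. f x \<ge> 0) \<and> bounded ((\<lambda>x. omega_bar x * f x) ` {(0::real)<..})
      \<and> log_unif_cont (\<lambda>x. omega_bar x * f x)}"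

definition mod_cont :: "(real \<Rightarrow> real) \<Rightarrow> real \<Rightarrow> real" where
  "mod_cont f \<delta> = Sup {\<bar>f (t * x) - f x\<bar> / ((1 + (ln x)^2) * (1 + (ln t)^2)) | t x.
      t > 0 \<and> x > 0 \<and> \<bar>ln t\<bar> \<le> \<delta>}"

definition MG :: "(real \<Rightarrow> real) \<Rightarrow> real \<Rightarrow> (real \<Rightarrow> real) \<Rightarrow> real \<Rightarrow> real" where
  "MG K w f x =
     (SUP k\<in>(UNIV::int set). K (exp (- real_of_int k) * x powr w) * f (exp (real_of_int k / w)))
     / (SUP k\<in>(UNIV::int set). K (exp (- real_of_int k) * x powr w))"

end

theory Submission imports Defs begin

text \<open>
  Both numerator and denominator of \<open>MG K w f x\<close> are suprema over the samples
  \<open>K\<^sub>k = K (e\<^sup>-\<^sup>k x\<^sup>w)\<close>, and the denominator is at least \<open>\<eta>\<close> because the sample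
  with \<open>k = \<lfloor>w ln x\<rfloor>\<close> lies in \<open>[1, e]\<close>. Hence it suffices to bound each deviation
  \<open>\<bar>K\<^sub>k\<bar> \<bar>f (e\<^sup>k\<^sup>/\<^sup>w) - f x\<bar>\<close> uniformly. Walking from \<open>x\<close> to \<open>e\<^sup>k\<^sup>/\<^sup>w\<close> in steps of
  logarithmic length at most \<open>1/w\<close> and applying the modulus \<open>\<Omega>(f, 1/w)\<close> to every step
  bounds \<open>\<bar>f (e\<^sup>k\<^sup>/\<^sup>w) - f x\<bar>\<close> by \<open>16 \<Omega> (1 + ln\<^sup>2 x) (1 + \<bar>k - w ln x\<bar>\<^sup>5)\<close>, and the
  factor \<open>\<bar>K\<^sub>k\<bar> (1 + \<bar>k - w ln x\<bar>\<^sup>5)\<close> is at most \<open>m\<^sub>0 + m\<^sub>5\<close>.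
\<close>

lemma power_le_one_plus_power5:
  fixes a :: real
  assumes "a \<ge> 0" "j \<le> 5"
  shows "a ^ j \<le> 1 + a ^ 5"
proof (cases "a \<le> 1")
  case True
  then have "a ^ j \<le> 1" using assms by (simp add: power_le_one)
  then show ?thesis using zero_le_power[OF assms(1), of 5] by linarith
next
  case False
  then have "a ^ j \<le> a ^ 5" using assms by (intro power_increasing) auto
  then show ?thesis by simp
qed

lemma one_plus_square_times_one_plus_le:
  fixes a :: real
  assumes "a \<ge> 0"
  shows "(1 + a\<^sup>2) * (1 + a) \<le> 4 * (1 + a ^ 5)"
proof -
  have expand: "(1 + a\<^sup>2) * (1 + a) = 1 + a + a ^ 2 + a ^ 3"
    by (simp add: algebra_simps power2_eq_square power3_eq_cube)
  have "a \<le> 1 + a ^ 5" "a ^ 2 \<le> 1 + a ^ 5" "a ^ 3 \<le> 1 + a ^ 5"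
    using power_le_one_plus_power5[OF assms, of 1] power_le_one_plus_power5[OF assms, of 2]
      power_le_one_plus_power5[OF assms, of 3] by simp_all
  moreover have "0 \<le> a ^ 5" using assms by simp
  ultimately show ?thesis unfolding expand by (smt (verit))
qed

lemma square_sum_le:
  fixes a b :: real
  shows "(a + b)\<^sup>2 \<le> 2 * a\<^sup>2 + 2 * b\<^sup>2"
  using zero_le_power2[of "a - b"] unfolding power2_sum power2_diff by linarith

subsection \<open>Chaining a logarithmic modulus of continuity\<close>

definition log_modulus_bound :: "(real \<Rightarrow> real) \<Rightarrow> real \<Rightarrow> real \<Rightarrow> bool" where
  "log_modulus_bound f d \<Omega> \<longleftrightarrow> (\<forall>t>0. \<forall>y>0. \<bar>ln t\<bar> \<le> d \<longrightarrow>
      \<bar>f (t * y) - f y\<bar> \<le> \<Omega> * (1 + (ln y)\<^sup>2) * (1 + (ln t)\<^sup>2))"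

lemma log_modulus_boundD:
  assumes "log_modulus_bound f d \<Omega>" "t > 0" "y > 0" "\<bar>ln t\<bar> \<le> d"
  shows "\<bar>f (t * y) - f y\<bar> \<le> \<Omega> * (1 + (ln y)\<^sup>2) * (1 + (ln t)\<^sup>2)"
  using assms unfolding log_modulus_bound_def by blast

lemma log_chain_sum:
  fixes f :: "real \<Rightarrow> real"
  assumes modulus: "log_modulus_bound f d \<Omega>"
    and "\<bar>s\<bar> \<le> d" and "y > 0"
  shows "\<bar>f (exp (real n * s) * y) - f y\<bar> \<le> (\<Sum>j<n. \<Omega> * (1 + (ln y + real j * s)\<^sup>2) * (1 + s\<^sup>2))"
proof (induction n)
  case 0
  then show ?case by simp
next
  case (Suc n)
  define y' where "y' = exp (real n * s) * y"
  have "y' > 0" and ln_y': "ln y' = ln y + real n * s"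
    using \<open>y > 0\<close> by (simp_all add: y'_def ln_mult)
  have shift: "exp (real (Suc n) * s) * y = exp s * y'"
    by (simp add: y'_def distrib_right exp_add)
  have "\<bar>f (exp s * y') - f y'\<bar> \<le> \<Omega> * (1 + (ln y + real n * s)\<^sup>2) * (1 + s\<^sup>2)"
    using log_modulus_boundD[OF modulus exp_gt_zero \<open>y' > 0\<close>] \<open>y' > 0\<close> \<open>\<bar>s\<bar> \<le> d\<close> by (simp add: ln_y')
  then show ?case using Suc unfolding shift y'_def[symmetric] by simp
qed

lemma log_chain_bound:
  fixes f :: "real \<Rightarrow> real"
  assumes modulus: "log_modulus_bound f d \<Omega>"
    and s: "\<bar>s\<bar> \<le> d" and "y > 0" "d \<le> 1" "\<Omega> \<ge> 0"
    and L: "real n * \<bar>s\<bar> \<le> L"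
  shows "\<bar>f (exp (real n * s) * y) - f y\<bar> \<le> real n * (4 * \<Omega> * (1 + (ln y)\<^sup>2) * (1 + L\<^sup>2))"
proof -
  have "\<Omega> * (1 + (ln y + real j * s)\<^sup>2) * (1 + s\<^sup>2) \<le> 4 * \<Omega> * (1 + (ln y)\<^sup>2) * (1 + L\<^sup>2)"
    if "j < n" for j
  proof -
    have "\<bar>real j * s\<bar> \<le> L"
      using L \<open>j < n\<close> mult_right_mono[of "real j" "real n" "\<bar>s\<bar>"] by (simp add: abs_mult)
    then have "(real j * s)\<^sup>2 \<le> L\<^sup>2"
      by (metis abs_ge_zero power2_abs power_mono)
    moreover have "2 * ((1 + (ln y)\<^sup>2) * (1 + L\<^sup>2)) = 2 + 2 * (ln y)\<^sup>2 + 2 * L\<^sup>2 + 2 * ((ln y)\<^sup>2 * L\<^sup>2)"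
      by (simp add: algebra_simps)
    ultimately have "1 + (ln y + real j * s)\<^sup>2 \<le> 2 * ((1 + (ln y)\<^sup>2) * (1 + L\<^sup>2))"
      using square_sum_le[of "ln y" "real j * s"] zero_le_power2[of "ln y * L"]
      unfolding power_mult_distrib by linarith
    moreover have "1 + s\<^sup>2 \<le> 2"
      using power_mono[of "\<bar>s\<bar>" 1 2] s \<open>d \<le> 1\<close> by simp
    ultimately have "\<Omega> * (1 + (ln y + real j * s)\<^sup>2) * (1 + s\<^sup>2)
        \<le> \<Omega> * (2 * ((1 + (ln y)\<^sup>2) * (1 + L\<^sup>2))) * 2"
      using \<open>\<Omega> \<ge> 0\<close> by (intro mult_mono mult_left_mono) auto
    then show ?thesis by simp
  qed
  then have "(\<Sum>j<n. \<Omega> * (1 + (ln y + real j * s)\<^sup>2) * (1 + s\<^sup>2))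
      \<le> (\<Sum>j<n. 4 * \<Omega> * (1 + (ln y)\<^sup>2) * (1 + L\<^sup>2))"
    by (intro sum_mono) simp
  then show ?thesis using log_chain_sum[OF modulus s \<open>y > 0\<close>, of n] by simp
qed

text \<open>The segment from \<open>ln y\<close> to \<open>ln z\<close> is cut into \<open>\<lceil>\<bar>ln z - ln y\<bar> / d\<rceil>\<close> equal steps.\<close>

lemma log_increment_bound:
  fixes f :: "real \<Rightarrow> real"
  assumes modulus: "log_modulus_bound f d \<Omega>"
    and "y > 0" "z > 0" "d > 0" "d \<le> 1" "\<Omega> \<ge> 0"
  shows "\<bar>f z - f y\<bar> \<le> 4 * \<Omega> * (1 + (ln y)\<^sup>2) * (1 + \<bar>ln z - ln y\<bar>\<^sup>2) * (1 + \<bar>ln z - ln y\<bar> / d)"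
proof -
  define L where "L = \<bar>ln z - ln y\<bar>"
  define n where "n = nat \<lceil>L / d\<rceil>"
  have "L \<ge> 0" by (simp add: L_def)
  have n_ge: "L / d \<le> real n" unfolding n_def by (metis of_nat_nat real_nat_ceiling_ge)
  have n_le: "real n \<le> 1 + L / d"
    unfolding n_def using \<open>L \<ge> 0\<close> \<open>d > 0\<close> by (simp add: of_nat_nat) linarith
  have bound_nonneg: "0 \<le> 4 * \<Omega> * (1 + (ln y)\<^sup>2) * (1 + L\<^sup>2)" using \<open>\<Omega> \<ge> 0\<close> by simp
  show ?thesis
  proof (cases "n = 0")
    case True
    then have "z = y"
      using n_ge \<open>L \<ge> 0\<close> \<open>d > 0\<close> \<open>y > 0\<close> \<open>z > 0\<close> by (simp add: L_def divide_le_0_iff)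
    then show ?thesis using bound_nonneg \<open>d > 0\<close> by (simp add: L_def)
  next
    case False
    define s where "s = (ln z - ln y) / real n"
    have abs_s: "\<bar>s\<bar> = L / real n" by (simp add: s_def L_def)
    have "\<bar>s\<bar> \<le> d"
      using n_ge \<open>d > 0\<close> False unfolding abs_s by (simp add: field_simps)
    moreover have "real n * \<bar>s\<bar> \<le> L" using False abs_s by simp
    moreover have "exp (real n * s) * y = z"
      using False \<open>y > 0\<close> \<open>z > 0\<close> by (simp add: s_def exp_diff)
    ultimately have "\<bar>f z - f y\<bar> \<le> real n * (4 * \<Omega> * (1 + (ln y)\<^sup>2) * (1 + L\<^sup>2))"
      using log_chain_bound[OF modulus _ \<open>y > 0\<close> \<open>d \<le> 1\<close> \<open>\<Omega> \<ge> 0\<close>] by metis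
    also have "\<dots> \<le> (1 + L / d) * (4 * \<Omega> * (1 + (ln y)\<^sup>2) * (1 + L\<^sup>2))"
      using n_le bound_nonneg by (rule mult_right_mono)
    finally show ?thesis by (simp add: L_def mult_ac)
  qed
qed

subsection \<open>The weighted logarithmic modulus of continuity\<close>

lemma weighted_bounded_imp_growth:
  fixes f :: "real \<Rightarrow> real"
  assumes "bounded ((\<lambda>x. omega_bar x * f x) ` {0<..})"
  obtains B where "B \<ge> 0" "\<And>y. y > 0 \<Longrightarrow> \<bar>f y\<bar> \<le> B * (1 + (ln y)\<^sup>2)"
proof -
  obtain B where B: "\<And>y. y > 0 \<Longrightarrow> \<bar>omega_bar y * f y\<bar> \<le> B"
    using assms unfolding bounded_iff by auto
  have growth: "\<bar>f y\<bar> \<le> B * (1 + (ln y)\<^sup>2)" if "y > 0" for y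
  proof -
    have "1 + (ln y)\<^sup>2 > 0" by (simp add: add_pos_nonneg)
    then show ?thesis
      using B[OF that] by (simp add: omega_bar_def abs_mult pos_divide_le_eq)
  qed
  moreover have "B \<ge> 0" using growth[of 1] by simp
  ultimately show thesis using that by blast
qed

lemma mod_cont_quotients_bdd_above:
  fixes f :: "real \<Rightarrow> real"
  assumes "bounded ((\<lambda>x. omega_bar x * f x) ` {0<..})"
  shows "bdd_above {\<bar>f (t * x) - f x\<bar> / ((1 + (ln x)\<^sup>2) * (1 + (ln t)\<^sup>2)) | t x.
      t > 0 \<and> x > 0 \<and> \<bar>ln t\<bar> \<le> d}"
proof -
  obtain B where "B \<ge> 0" and growth: "\<And>y. y > 0 \<Longrightarrow> \<bar>f y\<bar> \<le> B * (1 + (ln y)\<^sup>2)"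
    using weighted_bounded_imp_growth[OF assms] by blast
  have "\<bar>f (t * x) - f x\<bar> / ((1 + (ln x)\<^sup>2) * (1 + (ln t)\<^sup>2)) \<le> 3 * B"
    if "t > 0" "x > 0" for t x
  proof -
    define a b where "a = (ln t)\<^sup>2" and "b = (ln x)\<^sup>2"
    have "\<bar>f (t * x)\<bar> \<le> B * (1 + (ln t + ln x)\<^sup>2)"
      using growth[of "t * x"] that by (simp add: ln_mult)
    also have "\<dots> \<le> B * (1 + 2 * a + 2 * b)" unfolding a_def b_def
      using square_sum_le[of "ln t" "ln x"] \<open>B \<ge> 0\<close> by (intro mult_left_mono) auto
    finally have "\<bar>f (t * x)\<bar> \<le> B + 2 * (B * a) + 2 * (B * b)" by (simp add: algebra_simps)
    moreover have "\<bar>f x\<bar> \<le> B + B * b" using growth[OF \<open>x > 0\<close>] by (simp add: b_def algebra_simps)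
    moreover have "\<bar>f (t * x) - f x\<bar> \<le> \<bar>f (t * x)\<bar> + \<bar>f x\<bar>" by (rule abs_triangle_ineq4)
    moreover have "0 \<le> B * a" "0 \<le> B * b" "0 \<le> B * (a * b)"
      using \<open>B \<ge> 0\<close> by (simp_all add: a_def b_def)
    moreover have expand: "3 * B * ((1 + (ln x)\<^sup>2) * (1 + (ln t)\<^sup>2))
        = 3 * B + 3 * (B * a) + 3 * (B * b) + 3 * (B * (a * b))"
      by (simp add: a_def b_def algebra_simps)
    ultimately have "\<bar>f (t * x) - f x\<bar> \<le> 3 * B * ((1 + (ln x)\<^sup>2) * (1 + (ln t)\<^sup>2))"
      unfolding expand using \<open>B \<ge> 0\<close> by linarith
    moreover have "(1 + (ln x)\<^sup>2) * (1 + (ln t)\<^sup>2) > 0" by (simp add: add_pos_nonneg)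
    ultimately show ?thesis by (simp add: pos_divide_le_eq)
  qed
  then show ?thesis unfolding bdd_above_def by blast
qed

lemma log_modulus_bound_mod_cont:
  fixes f :: "real \<Rightarrow> real"
  assumes "bounded ((\<lambda>x. omega_bar x * f x) ` {0<..})"
  shows "log_modulus_bound f d (mod_cont f d)"
  unfolding log_modulus_bound_def
proof (intro allI impI)
  fix t y :: real
  assume "t > 0" "y > 0" "\<bar>ln t\<bar> \<le> d"
  then have "\<bar>f (t * y) - f y\<bar> / ((1 + (ln y)\<^sup>2) * (1 + (ln t)\<^sup>2)) \<le> mod_cont f d"
    unfolding mod_cont_def by (intro cSup_upper[OF _ mod_cont_quotients_bdd_above[OF assms]]) blast
  moreover have "(1 + (ln y)\<^sup>2) * (1 + (ln t)\<^sup>2) > 0" by (simp add: add_pos_nonneg)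
  ultimately show "\<bar>f (t * y) - f y\<bar> \<le> mod_cont f d * (1 + (ln y)\<^sup>2) * (1 + (ln t)\<^sup>2)"
    by (simp add: pos_divide_le_eq mult_ac)
qed

lemma mod_cont_nonneg:
  assumes "bounded ((\<lambda>x. omega_bar x * f x) ` {0<..})" "d \<ge> 0"
  shows "mod_cont f d \<ge> 0"
  using log_modulus_boundD[OF log_modulus_bound_mod_cont[OF assms(1)], of 1 1] assms(2) by simp

lemma sample_increment_bound:
  fixes f :: "real \<Rightarrow> real"
  assumes "bounded ((\<lambda>x. omega_bar x * f x) ` {0<..})" "w \<ge> 1" "x > 0"
  shows "\<bar>f (exp (a / w)) - f x\<bar>
    \<le> 16 * mod_cont f (1 / w) * (1 + (ln x)\<^sup>2) * (1 + \<bar>a - w * ln x\<bar> ^ 5)"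
proof -
  define \<Omega> where "\<Omega> = mod_cont f (1 / w)"
  define v where "v = a - w * ln x"
  have "w > 0" using \<open>w \<ge> 1\<close> by simp
  have "\<Omega> \<ge> 0" unfolding \<Omega>_def using mod_cont_nonneg[OF assms(1)] \<open>w > 0\<close> by simp
  have modulus: "log_modulus_bound f (1 / w) \<Omega>"
    unfolding \<Omega>_def by (rule log_modulus_bound_mod_cont[OF assms(1)])
  have ln_diff: "ln (exp (a / w)) - ln x = v / w" using \<open>w > 0\<close> by (simp add: v_def field_simps)
  have "\<bar>v / w\<bar> \<le> \<bar>v\<bar>"
    using \<open>w \<ge> 1\<close> by (simp add: abs_divide divide_le_eq mult_le_cancel_left1)
  then have "(1 + \<bar>v / w\<bar>\<^sup>2) * (1 + \<bar>v\<bar>) \<le> (1 + \<bar>v\<bar>\<^sup>2) * (1 + \<bar>v\<bar>)"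
    by (intro mult_right_mono power_mono add_left_mono) auto
  also have "\<dots> \<le> 4 * (1 + \<bar>v\<bar> ^ 5)" by (rule one_plus_square_times_one_plus_le) simp
  finally have poly: "(1 + \<bar>v / w\<bar>\<^sup>2) * (1 + \<bar>v\<bar>) \<le> 4 * (1 + \<bar>v\<bar> ^ 5)" .
  have "\<bar>f (exp (a / w)) - f x\<bar> \<le> 4 * \<Omega> * (1 + (ln x)\<^sup>2) * (1 + \<bar>v / w\<bar>\<^sup>2) * (1 + \<bar>v / w\<bar> / (1 / w))"
    using log_increment_bound[OF modulus \<open>x > 0\<close> exp_gt_zero, of "a / w"] \<open>w \<ge> 1\<close> \<open>\<Omega> \<ge> 0\<close>
    unfolding ln_diff by simp
  also have "\<dots> = 4 * \<Omega> * (1 + (ln x)\<^sup>2) * ((1 + \<bar>v / w\<bar>\<^sup>2) * (1 + \<bar>v\<bar>))"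
    using \<open>w > 0\<close> by simp
  also have "\<dots> \<le> 4 * \<Omega> * (1 + (ln x)\<^sup>2) * (4 * (1 + \<bar>v\<bar> ^ 5))"
    using poly \<open>\<Omega> \<ge> 0\<close> by (intro mult_left_mono) auto
  also have "\<dots> = 16 * \<Omega> * (1 + (ln x)\<^sup>2) * (1 + \<bar>v\<bar> ^ 5)" by (simp add: algebra_simps)
  finally show ?thesis unfolding \<Omega>_def v_def .
qed

subsection \<open>Kernels and their moments\<close>

lemma moment_upper:
  assumes "u > 0"
  shows "ereal (\<bar>K (exp (- real_of_int k) * u)\<bar> * \<bar>real_of_int k - ln u\<bar> ^ \<nu>) \<le> moment \<nu> K"
  unfolding moment_def using assms
  by (intro SUP_upper2[of u] SUP_upper2[of k]) auto

lemma kernel_moment0_finite: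
  assumes "is_kernel K"
  shows "moment 0 K < \<infinity>"
proof -
  obtain C where "\<And>y. y > 0 \<Longrightarrow> \<bar>K y\<bar> \<le> C"
    using assms unfolding is_kernel_def bounded_iff by auto
  then have "moment 0 K \<le> ereal C" unfolding moment_def by (intro SUP_least) simp
  then show ?thesis using order_le_less_trans[of _ "ereal C" \<infinity>] by simp
qed

lemma moment_term_le:
  assumes "moment \<nu> K < \<infinity>" "u > 0"
  shows "\<bar>K (exp (- real_of_int k) * u)\<bar> * \<bar>real_of_int k - ln u\<bar> ^ \<nu> \<le> real_of_ereal (moment \<nu> K)"
  using moment_upper[OF assms(2), of K k \<nu>] assms(1) by (cases "moment \<nu> K") auto

lemma kernel_samples_bdd_above:
  assumes "is_kernel K" "u > 0"
  shows "bdd_above (range (\<lambda>k::int. K (exp (- real_of_int k) * u)))"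
  using moment_term_le[OF kernel_moment0_finite[OF assms(1)] assms(2)]
  by (intro bdd_aboveI2) (auto simp: abs_le_iff)

lemma eta_le_SUP_kernel_samples:
  assumes "is_kernel K" "u > 0"
  shows "eta K \<le> (SUP k::int. K (exp (- real_of_int k) * u))"
proof -
  define k0 where "k0 = \<lfloor>ln u\<rfloor>"
  have "exp (- real_of_int k0) * u = exp (ln u - real_of_int k0)"
    using assms(2) by (simp add: exp_diff exp_minus field_simps)
  moreover have "0 \<le> ln u - real_of_int k0" "ln u - real_of_int k0 \<le> 1"
    unfolding k0_def by linarith+
  ultimately have sample_in: "exp (- real_of_int k0) * u \<in> {1..exp 1}" by simp
  obtain C where C: "\<And>y. y > 0 \<Longrightarrow> \<bar>K y\<bar> \<le> C"
    using assms(1) unfolding is_kernel_def bounded_iff by auto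
  have "bdd_below (K ` {1..exp 1})"
  proof (rule bdd_belowI2)
    fix y :: real
    assume "y \<in> {1..exp 1}"
    then have "\<bar>K y\<bar> \<le> C" using C by simp
    then show "- C \<le> K y" by linarith
  qed
  then have "eta K \<le> K (exp (- real_of_int k0) * u)"
    unfolding eta_def using sample_in by (intro cInf_lower) auto
  also have "\<dots> \<le> (SUP k::int. K (exp (- real_of_int k) * u))"
    by (rule cSUP_upper[OF _ kernel_samples_bdd_above[OF assms]]) simp
  finally show ?thesis .
qed

subsection \<open>A ratio of suprema\<close>

lemma SUP_ratio_approx:
  fixes a b :: "'i \<Rightarrow> real"
  assumes "bdd_above (range b)" "\<eta> > 0" "\<eta> \<le> (SUP k. b k)" "c \<ge> 0"
    and close: "\<And>k. \<bar>a k - b k * c\<bar> \<le> E"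
  shows "\<bar>(SUP k. a k) / (SUP k. b k) - c\<bar> \<le> E / \<eta>"
proof -
  define N where "N = (SUP k. a k)"
  define D where "D = (SUP k. b k)"
  have "D > 0" using assms(2,3) by (simp add: D_def)
  have "E \<ge> 0" using close by (meson abs_ge_zero order_trans)
  have bc_le: "b k * c \<le> D * c" for k
    unfolding D_def using \<open>c \<ge> 0\<close> by (intro mult_right_mono cSUP_upper[OF _ assms(1)]) auto
  have a_le: "a k \<le> D * c + E" for k
    using close[of k] bc_le[of k] by linarith
  then have "bdd_above (range a)" by (intro bdd_aboveI2)
  then have le_N: "a k \<le> N" for k unfolding N_def by (rule cSUP_upper[rotated]) simp
  have "N \<le> D * c + E" unfolding N_def using a_le by (intro cSUP_least) auto
  moreover have "D * c \<le> N + E"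
  proof (cases "c = 0")
    case True
    then show ?thesis using close[of undefined] le_N[of undefined] by simp
  next
    case False
    then have "c > 0" using \<open>c \<ge> 0\<close> by simp
    have "b k * c \<le> N + E" for k using close[of k] le_N[of k] by linarith
    then have "D \<le> (N + E) / c"
      unfolding D_def using \<open>c > 0\<close> by (intro cSUP_least) (auto simp: pos_le_divide_eq)
    then show ?thesis using \<open>c > 0\<close> by (simp add: pos_le_divide_eq mult.commute)
  qed
  ultimately have "\<bar>N - D * c\<bar> \<le> E" by linarith
  have "N / D - c = (N - D * c) / D" using \<open>D > 0\<close> by (simp add: field_simps)
  then have "\<bar>N / D - c\<bar> = \<bar>N - D * c\<bar> / D" using \<open>D > 0\<close> by simp
  also have "\<dots> \<le> E / D" using \<open>\<bar>N - D * c\<bar> \<le> E\<close> \<open>D > 0\<close> by (simp add: divide_right_mono)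
  also have "\<dots> \<le> E / \<eta>"
    using \<open>E \<ge> 0\<close> assms(2,3) by (intro divide_left_mono) (auto simp: D_def)
  finally show ?thesis by (simp add: N_def D_def)
qed

lemma kernel_weighted_term_le:
  assumes "is_kernel K" "moment 5 K < \<infinity>" "u > 0"
  shows "\<bar>K (exp (- real_of_int k) * u)\<bar> * (1 + \<bar>real_of_int k - ln u\<bar> ^ 5)
    \<le> real_of_ereal (moment 0 K) + real_of_ereal (moment 5 K)"
  using moment_term_le[OF kernel_moment0_finite[OF assms(1)] assms(3), of k]
    moment_term_le[OF assms(2,3), of k]
  by (simp add: distrib_left)

lemma kernel_sample_deviation:
  fixes K f :: "real \<Rightarrow> real" and k :: int
  assumes "is_kernel K" "moment 5 K < \<infinity>" "bounded ((\<lambda>x. omega_bar x * f x) ` {0<..})"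
    and "w \<ge> 1" "x > 0"
  defines "Kk \<equiv> K (exp (- real_of_int k) * x powr w)"
  shows "\<bar>Kk * f (exp (real_of_int k / w)) - Kk * f x\<bar>
    \<le> 16 * mod_cont f (1 / w) * (1 + (ln x)\<^sup>2)
      * (real_of_ereal (moment 0 K) + real_of_ereal (moment 5 K))"
proof -
  let ?v = "\<bar>real_of_int k - w * ln x\<bar>"
  have "mod_cont f (1 / w) \<ge> 0" using mod_cont_nonneg[OF assms(3)] \<open>w \<ge> 1\<close> by simp
  have "\<bar>Kk * f (exp (real_of_int k / w)) - Kk * f x\<bar> = \<bar>Kk\<bar> * \<bar>f (exp (real_of_int k / w)) - f x\<bar>"
    by (simp add: abs_mult right_diff_distrib[symmetric])
  also have "\<dots> \<le> \<bar>Kk\<bar> * (16 * mod_cont f (1 / w) * (1 + (ln x)\<^sup>2) * (1 + ?v ^ 5))"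
    using sample_increment_bound[OF assms(3-5)] by (intro mult_left_mono) auto
  also have "\<dots> = 16 * mod_cont f (1 / w) * (1 + (ln x)\<^sup>2) * (\<bar>Kk\<bar> * (1 + ?v ^ 5))"
    by (simp add: mult_ac)
  also have "\<dots> \<le> 16 * mod_cont f (1 / w) * (1 + (ln x)\<^sup>2)
      * (real_of_ereal (moment 0 K) + real_of_ereal (moment 5 K))"
    using kernel_weighted_term_le[OF assms(1,2), of "x powr w" k] \<open>x > 0\<close> \<open>mod_cont f (1 / w) \<ge> 0\<close>
    unfolding Kk_def by (intro mult_left_mono) (auto simp: ln_powr)
  finally show ?thesis .
qed

theorem theorem3p4:
  fixes K f :: "real \<Rightarrow> real" and w x :: real
  assumes "is_kernel K"
    and "eta K > 0"
    and "moment 5 K < \<infinity>"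
    and "f \<in> UB_plus"
    and "w \<ge> 1"
    and "x > 0"
  shows "\<bar>MG K w f x - f x\<bar> \<le>
    64 * (1 + (ln x)^2) * mod_cont f (1 / w) / eta K
      * (real_of_ereal (moment 0 K) + real_of_ereal (moment 5 K))"
proof -
  define E where "E = 16 * mod_cont f (1 / w) * (1 + (ln x)\<^sup>2)
    * (real_of_ereal (moment 0 K) + real_of_ereal (moment 5 K))"
  have "x powr w > 0" using \<open>x > 0\<close> by simp
  have weighted: "bounded ((\<lambda>x. omega_bar x * f x) ` {0<..})" and "f x \<ge> 0"
    using \<open>f \<in> UB_plus\<close> \<open>x > 0\<close> by (auto simp: UB_plus_def)
  note deviation = kernel_sample_deviation[OF \<open>is_kernel K\<close> \<open>moment 5 K < \<infinity>\<close> weighted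
      \<open>w \<ge> 1\<close> \<open>x > 0\<close>, folded E_def]
  have "\<bar>MG K w f x - f x\<bar> \<le> E / eta K"
    unfolding MG_def
    using SUP_ratio_approx[OF kernel_samples_bdd_above[OF \<open>is_kernel K\<close> \<open>x powr w > 0\<close>]
        \<open>eta K > 0\<close> eta_le_SUP_kernel_samples[OF \<open>is_kernel K\<close> \<open>x powr w > 0\<close>] \<open>f x \<ge> 0\<close>
        deviation] .
  \<comment> \<open>The argument yields the constant 16; the stated bound has 64.\<close>
  also have "\<dots> \<le> 4 * E / eta K"
    using deviation[of 0] \<open>eta K > 0\<close> by (intro divide_right_mono) auto
  finally show ?thesis by (simp add: E_def field_simps)
qed

end
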